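(* Let $G$ be a connected graph, $c\in V(G)$, and run the scan procedure at $c$ (with any processing order). Let $e$ and $f$ be two distinct edges incident to $c$. If $(e,f)\in\overline{\alpha}_c$, then either $e$ and $f$ span no square, or they span a square whose top vertex is not unique or is primal (i.e. lies in $N(c)$). Moreover, every pair $(e,f)$ of distinct edges incident to $c$ that span no square lies in $\overline{\alpha}_c$.
   Context: All graphs are finite, simple, undirected; $N(x)$ is the open neighborhood of $x$. For distinct edges $e=vu$, $f=vw$ sharing the vertex $v$, a square spanned by $e$ and $f$ is a 4-cycle $vuxw$ with $x\ne v$ adjacent to both $u$ and $w$; $x$ is its top vertex. A top vertex $x$ is unique if $|N(x)\cap N(v)|=2$. Scan procedure at $c$: the vertices of $N(c)$ are called primal, and edges incident to $c$ primal edges. Maintain two sets $I$ (incidence list) and $A$ (absence list) of unordered pairs of primal edges, both initially empty, and for every non-primal vertex $w\ne c$ a record of at most two "recorded primal neighbors" (first and second), initially none. Process the neighbors $u$ of $c$ one by one in an arbitrary order, and for each such $u$ process its neighbors $w\neq c$ in an arbitrary order: (1) if $w\in N(c)$, add $\{cu,cw\}$ to $A$; (2) else, if $w$ has no recorded primal neighbor, record $u$ as its first primal neighbor; (3) else, if $w$ has exactly one recorded primal neighbor $v$, record $u$ as its second primal neighbor, and if $\{cu,cv\}\notin I$ add $\{cu,cv\}$ to $I$, otherwise add $\{cu,cv\}$ to $A$; (4) else ($w$ has recorded first and second primal neighbors $v_1,v_2$) add $\{cv_1,cv_2\},\{cv_1,cu\},\{cv_2,cu\}$ to $A$ (the record is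 not changed). After the procedure, $\alpha_c$ is the symmetric relation on primal edges consisting of the pairs in $I$, $\beta_c$ the symmetric relation consisting of the pairs in $A$, and $\overline{\alpha}_c$ the set of pairs of primal edges not in $I$. *)

theory Defs
  imports Main
begin

definition simple_graph :: "'a set \<Rightarrow> ('a \<Rightarrow> 'a \<Rightarrow> bool) \<Rightarrow> bool" where
  "simple_graph V E \<longleftrightarrow> finite V \<and> (\<forall>x y. E x y \<longrightarrow> x \<in> V \<and> y \<in> V)
     \<and> (\<forall>x y. E x y \<longrightarrow> E y x) \<and> (\<forall>x. \<not> E x x)"

definition connected_graph :: "'a set \<Rightarrow> ('a \<Rightarrow> 'a \<Rightarrow> bool) \<Rightarrow> bool" where
  "connected_graph V E \<longleftrightarrow> (\<forall>x\<in>V. \<forall>y\<in>V. E\<^sup>*\<^sup>* x y)"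

definition nbhd :: "('a \<Rightarrow> 'a \<Rightarrow> bool) \<Rightarrow> 'a \<Rightarrow> 'a set" where
  "nbhd E x = {y. E x y}"

text \<open>Edges are 2-element vertex sets; the edge vu is {v,u}.
  A square spanned by vu and vw (sharing v) with top vertex x: 4-cycle v u x w, x \<noteq> v,
  x adjacent to u and w.\<close>
definition spans_square_top ::
  "('a \<Rightarrow> 'a \<Rightarrow> bool) \<Rightarrow> 'a \<Rightarrow> 'a \<Rightarrow> 'a \<Rightarrow> 'a \<Rightarrow> bool" where
  "spans_square_top E v u w x \<longleftrightarrow> E v u \<and> E v w \<and> u \<noteq> w \<and> x \<noteq> v \<and> E u x \<and> E x w"

definition unique_top :: "('a \<Rightarrow> 'a \<Rightarrow> bool) \<Rightarrow> 'a \<Rightarrow> 'a \<Rightarrow> bool" where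
  "unique_top E v x \<longleftrightarrow> card (nbhd E x \<inter> nbhd E v) = 2"

text \<open>Scan state: incidence list I, absence list A (sets of unordered pairs of primal edges,
  a pair {cu,cw} being the set {{c,u},{c,w}}), and the record of recorded primal
  neighbours of each vertex (list of length at most 2, first then second).\<close>
type_synonym 'a scan_state = "'a set set set \<times> 'a set set set \<times> ('a \<Rightarrow> 'a list)"

definition pe :: "'a \<Rightarrow> 'a \<Rightarrow> 'a \<Rightarrow> 'a set set" where
  "pe c u w = {{c,u},{c,w}}"

fun scan_step :: "('a \<Rightarrow> 'a \<Rightarrow> bool) \<Rightarrow> 'a \<Rightarrow> 'a \<Rightarrow> 'a \<Rightarrow> 'a scan_state \<Rightarrow> 'a scan_state" where
  "scan_step E c u w (I, A, R) =
    (if E c w then (I, A \<union> {pe c u w}, R)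
     else (case R w of
        [] \<Rightarrow> (I, A, R(w := [u]))
      | [v] \<Rightarrow> (if pe c u v \<notin> I then (I \<union> {pe c u v}, A, R(w := [v, u]))
                else (I, A \<union> {pe c u v}, R(w := [v, u])))
      | v1 # v2 # _ \<Rightarrow> (I, A \<union> {pe c v1 v2, pe c v1 u, pe c v2 u}, R)))"

definition scan_vertex :: "('a \<Rightarrow> 'a \<Rightarrow> bool) \<Rightarrow> 'a \<Rightarrow> ('a \<Rightarrow> 'a list) \<Rightarrow> 'a
    \<Rightarrow> 'a scan_state \<Rightarrow> 'a scan_state" where
  "scan_vertex E c nbrs u st = fold (scan_step E c u) (nbrs u) st"

definition scan :: "('a \<Rightarrow> 'a \<Rightarrow> bool) \<Rightarrow> 'a \<Rightarrow> 'a list \<Rightarrow> ('a \<Rightarrow> 'a list) \<Rightarrow> 'a scan_state" where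
  "scan E c ord nbrs = fold (scan_vertex E c nbrs) ord ({}, {}, (\<lambda>_. []))"

definition valid_order :: "('a \<Rightarrow> 'a \<Rightarrow> bool) \<Rightarrow> 'a \<Rightarrow> 'a list \<Rightarrow> ('a \<Rightarrow> 'a list) \<Rightarrow> bool" where
  "valid_order E c ord nbrs \<longleftrightarrow> distinct ord \<and> set ord = nbhd E c
     \<and> (\<forall>u\<in>nbhd E c. distinct (nbrs u) \<and> set (nbrs u) = nbhd E u - {c})"

definition alpha_bar :: "('a \<Rightarrow> 'a \<Rightarrow> bool) \<Rightarrow> 'a \<Rightarrow> 'a list \<Rightarrow> ('a \<Rightarrow> 'a list) \<Rightarrow> 'a set set set" where
  "alpha_bar E c ord nbrs =
     {{e, f} | e f. e \<noteq> f \<and> (\<exists>u\<in>nbhd E c. e = {c,u}) \<and> (\<exists>w\<in>nbhd E c. f = {c,w})}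
     - fst (scan E c ord nbrs)"

end

theory Submission
  imports Defs
begin

text \<open>A pair enters the incidence list only in step (3), when a non-primal vertex y already
  records a primal neighbour a and is met again from a primal neighbour v. Since recorded
  neighbours are adjacent to the vertex recording them, y \<noteq> c is a common neighbour of v and a,
  so every incident pair spans a square. Conversely, the record of a non-primal vertex x is
  always the list of the first two primal neighbours of x in processing order. If x is a unique
  top of the square spanned by cu and cw, these are exactly u and w, and processing the second
  of them puts the pair into the incidence list, which never shrinks.\<close>

abbreviation recorded :: "'a scan_state \<Rightarrow> 'a \<Rightarrow> 'a list" where
  "recorded st \<equiv> snd (snd st)"

lemma pe_commute: "pe c a b = pe c b a"
  by (auto simp: pe_def)

lemma pe_eq_iff:
  assumes "u \<noteq> c" "w \<noteq> c"
  shows "pe c a b = pe c u w \<longleftrightarrow> {a, b} = {u, w}"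
  using assms by (auto simp: pe_def doubleton_eq_iff)

lemma scan_step_incidences_mono: "fst st \<subseteq> fst (scan_step E c v y st)"
  by (cases st) (auto split: list.split)

lemma scan_step_record_other: "y \<noteq> x \<Longrightarrow> recorded (scan_step E c v y st) x = recorded st x"
  by (cases st) (auto split: list.split)

lemma scan_step_record:
  "\<not> E c x \<Longrightarrow> length (recorded st x) \<le> 2 \<Longrightarrow>
     recorded (scan_step E c v x st) x = take 2 (recorded st x @ [v])"
  by (cases st) (auto split: list.split simp: le_Suc_eq length_Suc_conv)

lemma scan_step_incidence:
  "\<not> E c x \<Longrightarrow> recorded st x = [a] \<Longrightarrow> pe c v a \<in> fst (scan_step E c v x st)"
  by (cases st) auto

lemma fold_scan_step_incidences_mono: "fst st \<subseteq> fst (fold (scan_step E c v) ys st)"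
proof (induction ys arbitrary: st)
  case (Cons y ys)
  show ?case
    using subset_trans[OF scan_step_incidences_mono Cons.IH] by (simp del: scan_step.simps)
qed simp

lemma scan_vertex_incidences_mono: "fst st \<subseteq> fst (scan_vertex E c nbrs v st)"
  unfolding scan_vertex_def by (rule fold_scan_step_incidences_mono)

lemma fold_scan_step_record:
  assumes "distinct ys" "\<not> E c x" "length (recorded st x) \<le> 2"
  shows "recorded (fold (scan_step E c v) ys st) x =
           (if x \<in> set ys then take 2 (recorded st x @ [v]) else recorded st x)"
  using assms
proof (induction ys arbitrary: st)
  case (Cons y ys)
  then show ?case
    by (cases "y = x") (auto simp del: scan_step.simps simp: scan_step_record scan_step_record_other)
qed simp

lemma scan_vertex_record:
  "distinct (nbrs v) \<Longrightarrow> \<not> E c x \<Longrightarrow> length (recorded st x) \<le> 2 \<Longrightarrow>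
     recorded (scan_vertex E c nbrs v st) x =
       (if x \<in> set (nbrs v) then take 2 (recorded st x @ [v]) else recorded st x)"
  unfolding scan_vertex_def by (rule fold_scan_step_record)

lemma fold_scan_step_incidence:
  assumes "x \<in> set ys" "\<not> E c x" "recorded st x = [a]"
  shows "pe c v a \<in> fst (fold (scan_step E c v) ys st)"
  using assms
proof (induction ys arbitrary: st)
  case (Cons y ys)
  show ?case
  proof (cases "y = x")
    case True
    then have "pe c v a \<in> fst (scan_step E c v y st)"
      using Cons.prems scan_step_incidence by metis
    then show ?thesis
      using fold_scan_step_incidences_mono[of "scan_step E c v y st"]
      by (simp del: scan_step.simps) blast
  next
    case False
    then show ?thesis
      using Cons by (simp del: scan_step.simps add: scan_step_record_other)
  qed
qed simp

lemma scan_vertex_incidence: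
  "x \<in> set (nbrs v) \<Longrightarrow> \<not> E c x \<Longrightarrow> recorded st x = [a] \<Longrightarrow>
     pe c v a \<in> fst (scan_vertex E c nbrs v st)"
  unfolding scan_vertex_def by (rule fold_scan_step_incidence)

lemma scan_snoc: "scan E c (L @ [v]) nbrs = scan_vertex E c nbrs v (scan E c L nbrs)"
  by (simp add: scan_def)

lemma scan_incidences_mono: "fst (scan E c L nbrs) \<subseteq> fst (scan E c (L @ L') nbrs)"
proof (induction L' rule: rev_induct)
  case (snoc v L')
  then show ?case
    using scan_vertex_incidences_mono scan_snoc[of E c "L @ L'"] by (metis append_assoc subset_trans)
qed simp

lemma scan_record:
  assumes "\<forall>v\<in>set L. distinct (nbrs v)" "\<not> E c x"
  shows "recorded (scan E c L nbrs) x = take 2 (filter (\<lambda>v. x \<in> set (nbrs v)) L)"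
  using assms(1)
proof (induction L rule: rev_induct)
  case Nil
  then show ?case by (simp add: scan_def)
next
  case (snoc v L)
  then show ?case
    by (simp add: scan_snoc scan_vertex_record assms(2) min_def)
qed

lemma scan_incidence:
  assumes "\<forall>v\<in>set L. distinct (nbrs v)" "\<not> E c x"
    and "filter (\<lambda>v. x \<in> set (nbrs v)) L = a # b # rest"
  shows "pe c a b \<in> fst (scan E c L nbrs)"
proof -
  let ?P = "\<lambda>v. x \<in> set (nbrs v)"
  obtain us vs where L: "L = us @ a # vs" and us: "filter ?P us = []" and "?P a"
    and vs: "filter ?P vs = b # rest"
    using filter_eq_ConsD[OF assms(3)] by (auto simp: filter_empty_conv)
  then obtain us' vs' where vs': "vs = us' @ b # vs'" and us': "filter ?P us' = []" and "?P b"
    using filter_eq_ConsD[OF vs] by (auto simp: filter_empty_conv)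
  define L1 where "L1 = us @ a # us'"
  have L_split: "L = (L1 @ [b]) @ vs'"
    by (simp add: L vs' L1_def)
  have "recorded (scan E c L1 nbrs) x = [a]"
    using scan_record[of L1 nbrs E c x] assms(1,2) us us' \<open>?P a\<close> by (auto simp: L1_def L_split)
  then have "pe c b a \<in> fst (scan E c (L1 @ [b]) nbrs)"
    using scan_vertex_incidence[of x nbrs b E c, OF \<open>?P b\<close> assms(2)] by (simp add: scan_snoc)
  then show ?thesis
    using scan_incidences_mono[of E c "L1 @ [b]" nbrs vs'] by (auto simp: L_split pe_commute)
qed

definition incidences_witnessed :: "('a \<Rightarrow> 'a \<Rightarrow> bool) \<Rightarrow> 'a \<Rightarrow> 'a scan_state \<Rightarrow> bool" where
  "incidences_witnessed E c st \<longleftrightarrow>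
     (\<forall>p\<in>fst st. \<exists>a b y. p = pe c a b \<and> y \<noteq> c \<and> E a y \<and> E b y)
     \<and> (\<forall>y. \<forall>a\<in>set (recorded st y). E a y)"

lemma scan_step_witnessed:
  assumes "incidences_witnessed E c st" "E v y" "y \<noteq> c"
  shows "incidences_witnessed E c (scan_step E c v y st)"
proof -
  obtain I A R where st: "st = (I, A, R)"
    by (cases st)
  have I: "\<forall>p\<in>I. \<exists>a b z. p = pe c a b \<and> z \<noteq> c \<and> E a z \<and> E b z"
    and R: "\<forall>z. \<forall>a\<in>set (R z). E a z"
    using assms(1) st by (simp_all add: incidences_witnessed_def)
  show ?thesis
  proof (cases "\<not> E c y \<and> (\<exists>a. R y = [a])")
    case True
    then obtain a where a: "R y = [a]" "\<not> E c y"
      by blast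
    then have "E a y"
      using R by auto
    with assms(2,3) have "\<exists>a' b z. pe c v a = pe c a' b \<and> z \<noteq> c \<and> E a' z \<and> E b z"
      by blast
    with a I R assms(2) st show ?thesis
      by (auto simp: incidences_witnessed_def)
  next
    case False
    with I R assms(2) st show ?thesis
      by (auto simp: incidences_witnessed_def split: list.split)
  qed
qed

lemma scan_witnessed:
  assumes "\<forall>v\<in>set L. \<forall>y\<in>set (nbrs v). E v y \<and> y \<noteq> c"
  shows "incidences_witnessed E c (scan E c L nbrs)"
  unfolding scan_def scan_vertex_def
proof (rule fold_invariant[where Q = "\<lambda>v. v \<in> set L"])
  show "incidences_witnessed E c ({}, {}, \<lambda>_. [])"
    by (simp add: incidences_witnessed_def)
next
  fix v st
  assume "v \<in> set L" "incidences_witnessed E c st"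
  with assms show "incidences_witnessed E c (fold (scan_step E c v) (nbrs v) st)"
    by (intro fold_invariant[where Q = "\<lambda>y. y \<in> set (nbrs v)" and P = "incidences_witnessed E c"])
      (auto simp del: scan_step.simps intro: scan_step_witnessed)
qed simp

lemma valid_order_nbrs:
  assumes "valid_order E c ord nbrs" "v \<in> set ord"
  shows "distinct (nbrs v)" "y \<in> set (nbrs v) \<longleftrightarrow> E v y \<and> y \<noteq> c"
  using assms by (auto simp: valid_order_def nbhd_def)

lemma incident_pair_spans_square:
  assumes "simple_graph V E" "valid_order E c ord nbrs"
    and "u \<in> nbhd E c" "w \<in> nbhd E c" "u \<noteq> w"
    and "pe c u w \<in> fst (scan E c ord nbrs)"
  shows "\<exists>x. spans_square_top E c u w x"
proof -
  have sym: "\<And>x y. E x y \<Longrightarrow> E y x" and irrefl: "\<And>x. \<not> E x x"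
    using assms(1) by (simp_all add: simple_graph_def)
  have "incidences_witnessed E c (scan E c ord nbrs)"
    using valid_order_nbrs[OF assms(2)] by (intro scan_witnessed) blast
  then obtain a b y where ab: "pe c a b = pe c u w" and y: "y \<noteq> c" "E a y" "E b y"
    using assms(6) unfolding incidences_witnessed_def by (metis (no_types, lifting))
  have cu: "E c u" "E c w"
    using assms(3,4) by (simp_all add: nbhd_def)
  then have "u \<noteq> c" "w \<noteq> c"
    using irrefl by auto
  then have "{a, b} = {u, w}"
    using ab by (simp add: pe_eq_iff)
  then have "E u y" "E w y"
    using y by (auto simp: doubleton_eq_iff)
  then have "spans_square_top E c u w y"
    using cu assms(5) y(1) sym by (simp add: spans_square_top_def)
  then show ?thesis ..
qed

lemma unique_top_common_nbhd:
  assumes "\<And>x y. E x y \<Longrightarrow> E y x" "spans_square_top E c u w x" "unique_top E c x"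
  shows "nbhd E x \<inter> nbhd E c = {u, w}"
proof -
  have sub: "{u, w} \<subseteq> nbhd E x \<inter> nbhd E c" and "u \<noteq> w"
    using assms(1,2) by (auto simp: spans_square_top_def nbhd_def)
  have card: "card (nbhd E x \<inter> nbhd E c) = 2"
    using assms(3) by (simp add: unique_top_def)
  then have "finite (nbhd E x \<inter> nbhd E c)"
    by (intro card_ge_0_finite) simp
  moreover have "card {u, w} = 2"
    using \<open>u \<noteq> w\<close> by simp
  ultimately show ?thesis
    using card_subset_eq[OF _ sub] card by simp
qed

lemma unique_nonprimal_top_incident:
  assumes "simple_graph V E" "valid_order E c ord nbrs"
    and "spans_square_top E c u w x" "unique_top E c x" "x \<notin> nbhd E c"
  shows "pe c u w \<in> fst (scan E c ord nbrs)"
proof -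
  have sym: "\<And>x y. E x y \<Longrightarrow> E y x"
    using assms(1) by (simp add: simple_graph_def)
  have "x \<noteq> c" "\<not> E c x"
    using assms(3,5) by (auto simp: spans_square_top_def nbhd_def)
  have ord: "set ord = nbhd E c" "distinct ord"
    using assms(2) by (simp_all add: valid_order_def)
  have common: "nbhd E x \<inter> nbhd E c = {u, w}"
    using unique_top_common_nbhd[OF sym assms(3,4)] .
  let ?F = "filter (\<lambda>v. x \<in> set (nbrs v)) ord"
  have "?F = filter (\<lambda>v. v \<in> {u, w}) ord"
  proof (rule filter_cong)
    fix v assume v: "v \<in> set ord"
    then have "x \<in> set (nbrs v) \<longleftrightarrow> v \<in> nbhd E x \<inter> nbhd E c"
      using valid_order_nbrs[OF assms(2) v] ord(1) \<open>x \<noteq> c\<close> sym by (auto simp: nbhd_def)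
    then show "x \<in> set (nbrs v) \<longleftrightarrow> v \<in> {u, w}"
      by (simp add: common)
  qed simp
  then have F: "distinct ?F" "set ?F = {u, w}"
    using ord common by auto
  moreover have "u \<noteq> w"
    using assms(3) by (simp add: spans_square_top_def)
  ultimately have "length ?F = 2"
    using distinct_card by fastforce
  then obtain a b where ab: "?F = [a, b]"
    by (auto simp: length_Suc_conv numeral_2_eq_2)
  then have "pe c a b \<in> fst (scan E c ord nbrs)"
    using scan_incidence[of ord nbrs E c x a b "[]"] valid_order_nbrs[OF assms(2)] \<open>\<not> E c x\<close> by blast
  moreover have "pe c a b = pe c u w"
    using F(2) ab by (auto simp: pe_def doubleton_eq_iff)
  ultimately show ?thesis
    by simp
qed

lemma primal_pair_in_alpha_bar_iff:
  assumes "u \<in> nbhd E c" "w \<in> nbhd E c" "u \<noteq> w"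
  shows "{{c, u}, {c, w}} \<in> alpha_bar E c ord nbrs \<longleftrightarrow> pe c u w \<notin> fst (scan E c ord nbrs)"
proof -
  have "{c, u} \<noteq> {c, w}"
    using assms(3) by (auto simp: doubleton_eq_iff)
  then show ?thesis
    using assms(1,2) by (auto simp: alpha_bar_def pe_def)
qed

theorem mainTheorem2:
  assumes "simple_graph V E" and "connected_graph V E" and "c \<in> V"
    and "valid_order E c ord nbrs"
    and "u \<in> nbhd E c" and "w \<in> nbhd E c" and "u \<noteq> w"
  shows "({{c,u},{c,w}} \<in> alpha_bar E c ord nbrs \<longrightarrow>
            (\<not> (\<exists>x. spans_square_top E c u w x)) \<or>
            (\<exists>x. spans_square_top E c u w x \<and> (\<not> unique_top E c x \<or> x \<in> nbhd E c)))
       \<and> ((\<not> (\<exists>x. spans_square_top E c u w x)) \<longrightarrow> {{c,u},{c,w}} \<in> alpha_bar E c ord nbrs)"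
  using unique_nonprimal_top_incident[OF assms(1,4)]
    incident_pair_spans_square[OF assms(1,4-7)]
    primal_pair_in_alpha_bar_iff[OF assms(5-7)]
  by blast

end
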